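(* Suppose the description of $K$ contains a ball constraint, i.e. $g_m(x)=R^2-\sum_{i=1}^n x_i^2$ for some real $R$. Then for every integer $d\ge d_{\min}$, every feasible point $y=(y_\alpha)_{|\alpha|\le 2d}$ of $P_d$ satisfies $$\sqrt{\textstyle\sum_{|\alpha|\le 2d} y_\alpha^2}\;\le\;\sqrt{\binom{n+d}{n}}\;\sum_{k=0}^{d}R^{2k},$$ i.e. the feasible set of $P_d$ is contained in the Euclidean ball of that radius centered at the origin.
   Context: Polynomial optimization problem: minimize $f(x)=\sum_\alpha f_\alpha x^\alpha$ over $x\in\mathbb R^n$ subject to $g_i(x)=\sum_\alpha g_{i,\alpha}x^\alpha\ge 0$, $i=1,\dots,m$, with $f,g_i$ real polynomials; $x^\alpha=x_1^{\alpha_1}\cdots x_n^{\alpha_n}$, $|\alpha|=\sum_i\alpha_i$; $K=\{x: g_i(x)\ge0,\ i=1,\dots,m\}$. Set $g_0:=1$ and let $d_i$ be the smallest integer $\ge \deg(g_i)/2$, $i=0,\dots,m$; $d_{\min}:=\max_{i}d_i$ (and assume $\deg f\le 2d$). For $y=(y_\alpha)_{|\alpha|\le 2d}$ the localizing matrix is $M_{d-d_i}(g_iy):=\big(\sum_\gamma g_{i,\gamma}y_{\alpha+\beta+\gamma}\big)_{|\alpha|,|\beta|\le d-d_i}$, and $M_d(y):=M_d(g_0y)$. The primal problem $P_d$ is: $\inf_y \sum_\alpha f_\alpha y_\alpha$ subject to $y_0=1$ and $M_{d-d_i}(g_iy)\succeq 0$ for $i=0,1,\dots,m$ (real symmetric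 positive semidefiniteness). *)

theory Defs
  imports Complex_Main
begin

text \<open>Multivariate polynomials in the variables x_0,...,x_{n-1} are represented by
  their coefficient functions on multi-indices. A multi-index is a function
  alpha :: nat => nat vanishing outside {0..<n}; x^alpha = prod x_i^(alpha i).\<close>

type_synonym mindex = "nat \<Rightarrow> nat"
type_synonym rpoly = "mindex \<Rightarrow> real"

definition mdeg :: "mindex \<Rightarrow> nat \<Rightarrow> nat" where
  "mdeg \<alpha> n = (\<Sum>i<n. \<alpha> i)"

definition mindices :: "nat \<Rightarrow> nat \<Rightarrow> mindex set" where
  "mindices n k = {\<alpha>. (\<forall>i\<ge>n. \<alpha> i = 0) \<and> mdeg \<alpha> n \<le> k}"

definition madd :: "mindex \<Rightarrow> mindex \<Rightarrow> mindex" where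
  "madd \<alpha> \<beta> = (\<lambda>j. \<alpha> j + \<beta> j)"

definition mzero :: mindex where
  "mzero = (\<lambda>_. 0)"

definition is_poly :: "nat \<Rightarrow> rpoly \<Rightarrow> bool" where
  "is_poly n p \<longleftrightarrow> finite {\<alpha>. p \<alpha> \<noteq> 0} \<and> (\<forall>\<alpha>. p \<alpha> \<noteq> 0 \<longrightarrow> (\<forall>i\<ge>n. \<alpha> i = 0))"

text \<open>Total degree (the zero polynomial gets degree 0).\<close>
definition pdeg :: "nat \<Rightarrow> rpoly \<Rightarrow> nat" where
  "pdeg n p = Max (insert 0 ((\<lambda>\<alpha>. mdeg \<alpha> n) ` {\<alpha>. p \<alpha> \<noteq> 0}))"

definition halfdeg :: "nat \<Rightarrow> rpoly \<Rightarrow> nat" where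
  "halfdeg n p = (pdeg n p + 1) div 2"

definition one_poly :: rpoly where
  "one_poly \<alpha> = (if \<alpha> = mzero then 1 else 0)"

definition ball_poly :: "nat \<Rightarrow> real \<Rightarrow> rpoly" where
  "ball_poly n R \<alpha> =
     (if \<alpha> = mzero then R\<^sup>2
      else if (\<exists>i<n. \<alpha> = (\<lambda>j. if j = i then 2 else 0)) then -1 else 0)"

definition locmat :: "nat \<Rightarrow> rpoly \<Rightarrow> (mindex \<Rightarrow> real) \<Rightarrow> mindex \<Rightarrow> mindex \<Rightarrow> real" where
  "locmat n g y \<alpha> \<beta> = (\<Sum>\<gamma>\<in>mindices n (pdeg n g). g \<gamma> * y (madd (madd \<alpha> \<beta>) \<gamma>))"

definition psd_on :: "mindex set \<Rightarrow> (mindex \<Rightarrow> mindex \<Rightarrow> real) \<Rightarrow> bool" where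
  "psd_on A M \<longleftrightarrow> (\<forall>v :: mindex \<Rightarrow> real. 0 \<le> (\<Sum>\<alpha>\<in>A. \<Sum>\<beta>\<in>A. v \<alpha> * M \<alpha> \<beta> * v \<beta>))"

definition gpoly :: "(nat \<Rightarrow> rpoly) \<Rightarrow> nat \<Rightarrow> rpoly" where
  "gpoly g i = (if i = 0 then one_poly else g i)"

definition d_min :: "nat \<Rightarrow> (nat \<Rightarrow> rpoly) \<Rightarrow> nat \<Rightarrow> nat" where
  "d_min n g m = Max ((\<lambda>i. halfdeg n (gpoly g i)) ` {0..m})"

definition feasible_Pd :: "nat \<Rightarrow> (nat \<Rightarrow> rpoly) \<Rightarrow> nat \<Rightarrow> nat \<Rightarrow> (mindex \<Rightarrow> real) \<Rightarrow> bool" where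
  "feasible_Pd n g m d y \<longleftrightarrow>
     y mzero = 1 \<and>
     (\<forall>i\<in>{0..m}. psd_on (mindices n (d - halfdeg n (gpoly g i))) (locmat n (gpoly g i) y))"

end

theory Submission
  imports Defs
begin

text \<open>The Hankel matrix M_d(y) is positive semidefinite, so its entries are dominated by its
  diagonal: y_(a+b)^2 \<le> y_(2a) y_(2b). Since every multi-index of degree \<le> 2d splits as a+b
  with a, b of degree \<le> d, the Euclidean norm of y is at most the Frobenius norm of M_d(y),
  which is at most its trace T_d = \<Sum>_{|a|\<le>d} y_(2a). The diagonal of the localizing matrix of
  the ball constraint gives \<Sum>_i y_(2a+2e_i) \<le> R^2 y_(2a); as every nonzero multi-index of
  degree \<le> k+1 has the form a+e_i with |a| \<le> k, this yields T_(k+1) \<le> 1 + R^2 T_k, hence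
  T_d \<le> \<Sum>_{k\<le>d} R^(2k).\<close>

lemma finite_mindices: "finite (mindices n k)"
proof -
  let ?f = "\<lambda>xs::nat list. \<lambda>i. if i < length xs then xs ! i else 0"
  have "mindices n k \<subseteq> ?f ` {xs. set xs \<subseteq> {..k} \<and> length xs = n}"
  proof
    fix \<alpha> assume "\<alpha> \<in> mindices n k"
    hence zero: "\<forall>i\<ge>n. \<alpha> i = 0" and deg: "(\<Sum>i<n. \<alpha> i) \<le> k"
      by (auto simp: mindices_def mdeg_def)
    have "\<alpha> i \<le> k" if "i < n" for i
      using member_le_sum[of i "{..<n}" \<alpha>] that deg by auto
    moreover have "\<alpha> = ?f (map \<alpha> [0..<n])"
      using zero by (auto simp: fun_eq_iff)
    ultimately show "\<alpha> \<in> ?f ` {xs. set xs \<subseteq> {..k} \<and> length xs = n}"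
      by (intro image_eqI[of _ _ "map \<alpha> [0..<n]"]) auto
  qed
  moreover have "finite {xs. set xs \<subseteq> {..k} \<and> length xs = n}"
    by (rule finite_lists_length_eq) auto
  ultimately show ?thesis
    by (meson finite_surj)
qed

lemma mindices_0: "mindices n 0 = {mzero}"
  by (auto simp: mindices_def mdeg_def mzero_def fun_eq_iff) (meson lessThan_iff not_le)

lemma mindices_0_vars: "mindices 0 k = {mzero}"
  by (auto simp: mindices_def mdeg_def mzero_def fun_eq_iff)

lemma mzero_in_mindices: "mzero \<in> mindices n k"
  by (simp add: mindices_def mdeg_def mzero_def)

lemma mindices_mono: "k \<le> k' \<Longrightarrow> mindices n k \<subseteq> mindices n k'"
  by (auto simp: mindices_def)

lemma mdeg_mzero: "mdeg mzero n = 0"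
  by (simp add: mdeg_def mzero_def)

lemma mdeg_madd: "mdeg (madd \<alpha> \<beta>) n = mdeg \<alpha> n + mdeg \<beta> n"
  by (simp add: mdeg_def madd_def sum.distrib)

lemma madd_mzero [simp]: "madd \<alpha> mzero = \<alpha>"
  by (simp add: madd_def mzero_def)

lemma madd_commute: "madd \<alpha> \<beta> = madd \<beta> \<alpha>"
  by (simp add: madd_def add.commute)

definition munit :: "nat \<Rightarrow> mindex" where
  "munit i = (\<lambda>j. if j = i then 1 else 0)"

lemma mdeg_munit: "i < n \<Longrightarrow> mdeg (munit i) n = 1"
  by (simp add: mdeg_def munit_def)

lemma madd_munit_in_mindices:
  "\<alpha> \<in> mindices n k \<Longrightarrow> i < n \<Longrightarrow> madd \<alpha> (munit i) \<in> mindices n (Suc k)"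
  by (auto simp: mindices_def mdeg_madd mdeg_munit) (auto simp: madd_def munit_def)

lemma mindices_Suc_pos_subset:
  assumes "i < n"
  shows "{\<alpha> \<in> mindices n (Suc k). 0 < \<alpha> i} \<subseteq> (\<lambda>\<alpha>. madd \<alpha> (munit i)) ` mindices n k"
proof
  fix \<beta> assume \<beta>: "\<beta> \<in> {\<alpha> \<in> mindices n (Suc k). 0 < \<alpha> i}"
  define \<alpha> where "\<alpha> = (\<lambda>j. \<beta> j - munit i j)"
  have \<beta>_eq: "\<beta> = madd \<alpha> (munit i)"
    using \<beta> by (auto simp: \<alpha>_def madd_def munit_def fun_eq_iff)
  hence "mdeg \<beta> n = mdeg \<alpha> n + 1"
    using assms by (simp add: mdeg_madd mdeg_munit)
  with \<beta> have "\<alpha> \<in> mindices n k"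
    by (auto simp: mindices_def \<alpha>_def)
  with \<beta>_eq show "\<beta> \<in> (\<lambda>\<alpha>. madd \<alpha> (munit i)) ` mindices n k"
    by blast
qed

text \<open>Every nonzero multi-index of degree \<le> k+1 arises from one of degree \<le> k by raising
  some positive coordinate; overcounting is harmless since the summand is nonnegative.\<close>

lemma sum_mindices_Suc_le:
  fixes D :: "mindex \<Rightarrow> real"
  assumes nonneg: "\<And>\<alpha>. \<alpha> \<in> mindices n (Suc k) \<Longrightarrow> 0 \<le> D \<alpha>"
  shows "(\<Sum>\<alpha>\<in>mindices n (Suc k). D \<alpha>)
           \<le> D mzero + (\<Sum>\<alpha>\<in>mindices n k. \<Sum>i<n. D (madd \<alpha> (munit i)))"
proof -
  let ?B = "mindices n (Suc k) - {mzero}"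
  have "(\<Sum>\<alpha>\<in>?B. D \<alpha>) \<le> (\<Sum>\<alpha>\<in>?B. \<Sum>i<n. if 0 < \<alpha> i then D \<alpha> else 0)"
  proof (rule sum_mono)
    fix \<alpha> assume \<alpha>: "\<alpha> \<in> ?B"
    then obtain i where i: "i < n" "0 < \<alpha> i"
      by (auto simp: mindices_def mzero_def fun_eq_iff) (metis gr0I not_le)
    have "D \<alpha> = (if 0 < \<alpha> i then D \<alpha> else 0)"
      using i by simp
    also have "\<dots> \<le> (\<Sum>i<n. if 0 < \<alpha> i then D \<alpha> else 0)"
      by (rule member_le_sum) (use i \<alpha> nonneg in auto)
    finally show "D \<alpha> \<le> (\<Sum>i<n. if 0 < \<alpha> i then D \<alpha> else 0)" .
  qed
  also have "\<dots> = (\<Sum>i<n. \<Sum>\<alpha>\<in>?B. if 0 < \<alpha> i then D \<alpha> else 0)"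
    by (rule sum.swap)
  also have "\<dots> = (\<Sum>i<n. \<Sum>\<alpha>\<in>{\<alpha> \<in> ?B. 0 < \<alpha> i}. D \<alpha>)"
    by (intro sum.cong refl sum.inter_filter[symmetric]) (simp add: finite_mindices)
  also have "\<dots> \<le> (\<Sum>i<n. \<Sum>\<alpha>\<in>(\<lambda>\<alpha>. madd \<alpha> (munit i)) ` mindices n k. D \<alpha>)"
  proof (rule sum_mono, rule sum_mono2)
    fix i assume "i \<in> {..<n}"
    thus "{\<alpha> \<in> ?B. 0 < \<alpha> i} \<subseteq> (\<lambda>\<alpha>. madd \<alpha> (munit i)) ` mindices n k"
      using mindices_Suc_pos_subset[of i n k] by blast
    show "0 \<le> D \<alpha>" if "\<alpha> \<in> (\<lambda>\<alpha>. madd \<alpha> (munit i)) ` mindices n k - {\<alpha> \<in> ?B. 0 < \<alpha> i}" for \<alpha>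
      using that \<open>i \<in> {..<n}\<close> madd_munit_in_mindices nonneg by blast
  qed (simp add: finite_mindices)
  also have "\<dots> = (\<Sum>\<alpha>\<in>mindices n k. \<Sum>i<n. D (madd \<alpha> (munit i)))"
    by (subst sum.swap, rule sum.cong[OF refl], rule sum.reindex_cong[of "\<lambda>\<alpha>. madd \<alpha> (munit i)" for i])
       (auto simp: inj_on_def madd_def fun_eq_iff)
  finally show ?thesis
    by (simp add: sum.remove[OF finite_mindices mzero_in_mindices])
qed

lemma quadratic_nonneg_imp_discriminant:
  fixes a b c :: real
  assumes nonneg: "\<And>t. 0 \<le> a * t\<^sup>2 + 2 * b * t + c" and "0 \<le> a"
  shows "b\<^sup>2 \<le> a * c"
proof (cases "a = 0")
  case True
  show ?thesis
  proof (rule ccontr)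
    assume "\<not> ?thesis"
    with True have "b \<noteq> 0" by simp
    have "0 \<le> 2 * b * (- (c + 1) / (2 * b)) + c"
      using nonneg[of "- (c + 1) / (2 * b)"] True by simp
    also have "\<dots> = -1"
      using \<open>b \<noteq> 0\<close> by (simp add: field_simps)
    finally show False by simp
  qed
next
  case False
  with \<open>0 \<le> a\<close> have "0 < a" by simp
  have "0 \<le> a * (- b / a)\<^sup>2 + 2 * b * (- b / a) + c"
    by (rule nonneg)
  also have "\<dots> = (a * c - b\<^sup>2) / a"
    using \<open>0 < a\<close> by (simp add: field_simps power2_eq_square)
  finally show ?thesis
    using \<open>0 < a\<close> by (simp add: zero_le_divide_iff)
qed

lemma psd_on_subset:
  assumes "psd_on A M" "finite A" "S \<subseteq> A"
  shows "psd_on S M"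
  unfolding psd_on_def
proof
  fix v :: "mindex \<Rightarrow> real"
  let ?w = "\<lambda>a. if a \<in> S then v a else 0"
  have "0 \<le> (\<Sum>a\<in>A. \<Sum>b\<in>A. ?w a * M a b * ?w b)"
    using assms(1) by (simp add: psd_on_def)
  also have "\<dots> = (\<Sum>a\<in>A. if a \<in> S then \<Sum>b\<in>A. if b \<in> S then v a * M a b * v b else 0 else 0)"
    by (intro sum.cong refl) (auto intro: sum.cong)
  also have "\<dots> = (\<Sum>a\<in>S. \<Sum>b\<in>S. v a * M a b * v b)"
    using assms(2,3) by (simp add: sum.inter_restrict[symmetric] Int_absorb1)
  finally show "0 \<le> (\<Sum>a\<in>S. \<Sum>b\<in>S. v a * M a b * v b)" .
qed

lemma psd_on_diag_nonneg:
  assumes "psd_on A M" "finite A" "x \<in> A"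
  shows "0 \<le> M x x"
proof -
  have "psd_on {x} M"
    using assms by (auto intro: psd_on_subset[OF assms(1,2)])
  from this[unfolded psd_on_def, rule_format, of "\<lambda>_. 1"] show ?thesis
    by simp
qed

lemma psd_on_entry_sq_le:
  assumes psd: "psd_on A M" and "finite A" "x \<in> A" "z \<in> A" and sym: "M x z = M z x"
  shows "(M x z)\<^sup>2 \<le> M x x * M z z"
proof (cases "x = z")
  case True
  thus ?thesis by (simp add: power2_eq_square)
next
  case False
  have psd2: "psd_on {x, z} M"
    using assms by (auto intro: psd_on_subset[OF assms(1,2)])
  have "0 \<le> M x x * t\<^sup>2 + 2 * M x z * t + M z z" for t
    using psd2[unfolded psd_on_def, rule_format, of "\<lambda>a. if a = x then t else 1"] False sym
    by (simp add: algebra_simps power2_eq_square)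
  thus ?thesis
    by (rule quadratic_nonneg_imp_discriminant) (rule psd_on_diag_nonneg[OF assms(1-3)])
qed

lemma psd_on_sum_sq_le_trace_sq:
  assumes "psd_on A M" "finite A" and sym: "\<And>x z. x \<in> A \<Longrightarrow> z \<in> A \<Longrightarrow> M x z = M z x"
  shows "(\<Sum>a\<in>A. \<Sum>b\<in>A. (M a b)\<^sup>2) \<le> (\<Sum>a\<in>A. M a a)\<^sup>2"
proof -
  have "(\<Sum>a\<in>A. \<Sum>b\<in>A. (M a b)\<^sup>2) \<le> (\<Sum>a\<in>A. \<Sum>b\<in>A. M a a * M b b)"
    by (intro sum_mono psd_on_entry_sq_le[OF assms(1,2)] sym)
  also have "\<dots> = (\<Sum>a\<in>A. M a a)\<^sup>2"
    by (simp add: power2_eq_square sum_product)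
  finally show ?thesis .
qed

text \<open>Greedy truncation: the coordinates of \<gamma> are kept from left to right until the degree
  budget d is used up.\<close>

definition mtrunc :: "nat \<Rightarrow> mindex \<Rightarrow> mindex" where
  "mtrunc d \<gamma> = (\<lambda>i. min (\<gamma> i) (d - (\<Sum>j<i. \<gamma> j)))"

lemma sum_mtrunc: "(\<Sum>i<k. mtrunc d \<gamma> i) = min d (\<Sum>i<k. \<gamma> i)"
  by (induction k) (auto simp: mtrunc_def)

lemma mtrunc_split:
  assumes "\<gamma> \<in> mindices n (2 * d)"
  shows "mtrunc d \<gamma> \<in> mindices n d" "(\<lambda>i. \<gamma> i - mtrunc d \<gamma> i) \<in> mindices n d"
    "madd (mtrunc d \<gamma>) (\<lambda>i. \<gamma> i - mtrunc d \<gamma> i) = \<gamma>"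
proof -
  have zero: "\<forall>i\<ge>n. \<gamma> i = 0" and deg: "(\<Sum>i<n. \<gamma> i) \<le> 2 * d"
    using assms by (auto simp: mindices_def mdeg_def)
  have le: "mtrunc d \<gamma> i \<le> \<gamma> i" for i
    by (simp add: mtrunc_def)
  show "mtrunc d \<gamma> \<in> mindices n d"
    using zero le sum_mtrunc[of d \<gamma> n] by (auto simp: mindices_def mdeg_def) (metis le_zero_eq)
  have "(\<Sum>i<n. \<gamma> i - mtrunc d \<gamma> i) = (\<Sum>i<n. \<gamma> i) - (\<Sum>i<n. mtrunc d \<gamma> i)"
    by (rule sum_subtractf_nat) (use le in auto)
  with sum_mtrunc[of d \<gamma> n] deg have "(\<Sum>i<n. \<gamma> i - mtrunc d \<gamma> i) \<le> d"
    by simp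
  thus "(\<lambda>i. \<gamma> i - mtrunc d \<gamma> i) \<in> mindices n d"
    using zero by (auto simp: mindices_def mdeg_def)
  show "madd (mtrunc d \<gamma>) (\<lambda>i. \<gamma> i - mtrunc d \<gamma> i) = \<gamma>"
    using le by (auto simp: madd_def fun_eq_iff)
qed

lemma sum_sq_mindices_double_le:
  fixes y :: "mindex \<Rightarrow> real"
  shows "(\<Sum>\<gamma>\<in>mindices n (2 * d). (y \<gamma>)\<^sup>2)
           \<le> (\<Sum>\<alpha>\<in>mindices n d. \<Sum>\<beta>\<in>mindices n d. (y (madd \<alpha> \<beta>))\<^sup>2)"
proof -
  let ?split = "\<lambda>\<gamma>. (mtrunc d \<gamma>, \<lambda>i. \<gamma> i - mtrunc d \<gamma> i)"
  let ?h = "\<lambda>(\<alpha>, \<beta>). (y (madd \<alpha> \<beta>))\<^sup>2"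
  have inj: "inj_on ?split (mindices n (2 * d))"
    by (rule inj_on_inverseI[where g = "\<lambda>(\<alpha>, \<beta>). madd \<alpha> \<beta>"]) (simp add: mtrunc_split(3))
  have "(\<Sum>\<gamma>\<in>mindices n (2 * d). (y \<gamma>)\<^sup>2) = (\<Sum>\<gamma>\<in>mindices n (2 * d). ?h (?split \<gamma>))"
    by (rule sum.cong) (auto simp: mtrunc_split(3))
  also have "\<dots> = (\<Sum>p\<in>?split ` mindices n (2 * d). ?h p)"
    by (simp add: sum.reindex[OF inj])
  also have "\<dots> \<le> (\<Sum>p\<in>mindices n d \<times> mindices n d. ?h p)"
    by (rule sum_mono2) (auto simp: finite_mindices mtrunc_split)
  also have "\<dots> = (\<Sum>\<alpha>\<in>mindices n d. \<Sum>\<beta>\<in>mindices n d. (y (madd \<alpha> \<beta>))\<^sup>2)"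
    by (simp add: sum.cartesian_product)
  finally show ?thesis .
qed

lemma sqrt_sum_sq_le_hankel_trace:
  fixes y :: "mindex \<Rightarrow> real"
  assumes psd: "psd_on (mindices n d) (\<lambda>\<alpha> \<beta>. y (madd \<alpha> \<beta>))"
  shows "sqrt (\<Sum>\<gamma>\<in>mindices n (2 * d). (y \<gamma>)\<^sup>2) \<le> (\<Sum>\<alpha>\<in>mindices n d. y (madd \<alpha> \<alpha>))"
proof -
  have "(\<Sum>\<gamma>\<in>mindices n (2 * d). (y \<gamma>)\<^sup>2) \<le> (\<Sum>\<alpha>\<in>mindices n d. y (madd \<alpha> \<alpha>))\<^sup>2"
    using sum_sq_mindices_double_le
      psd_on_sum_sq_le_trace_sq[OF psd finite_mindices] madd_commute
    by (metis (no_types, lifting) order_trans)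
  moreover have "0 \<le> (\<Sum>\<alpha>\<in>mindices n d. y (madd \<alpha> \<alpha>))"
    using psd_on_diag_nonneg[OF psd finite_mindices] by (simp add: sum_nonneg)
  ultimately show ?thesis
    by (rule real_le_lsqrt[rotated])
qed

lemma pdeg_one_poly: "pdeg n one_poly = 0"
proof -
  have "{\<alpha>. one_poly \<alpha> \<noteq> 0} = {mzero}"
    by (auto simp: one_poly_def)
  thus ?thesis
    by (simp add: pdeg_def mdeg_mzero)
qed

lemma locmat_one_poly: "locmat n one_poly y = (\<lambda>\<alpha> \<beta>. y (madd \<alpha> \<beta>))"
  by (simp add: locmat_def pdeg_one_poly mindices_0 one_poly_def fun_eq_iff)

lemma madd_munit_self: "madd (munit i) (munit i) = (\<lambda>j. if j = i then 2 else 0)"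
  by (simp add: madd_def munit_def fun_eq_iff)

lemma ball_poly_support:
  "ball_poly n R \<gamma> \<noteq> 0 \<Longrightarrow> \<gamma> \<in> insert mzero ((\<lambda>i. madd (munit i) (munit i)) ` {..<n})"
  by (auto simp: ball_poly_def madd_munit_self split: if_splits)

lemma ball_poly_mzero: "ball_poly n R mzero = R\<^sup>2"
  by (simp add: ball_poly_def)

lemma ball_poly_munit_self: "i < n \<Longrightarrow> ball_poly n R (madd (munit i) (munit i)) = -1"
  by (auto simp: ball_poly_def madd_munit_self mzero_def fun_eq_iff)

lemma mdeg_munit_self: "i < n \<Longrightarrow> mdeg (madd (munit i) (munit i)) n = 2"
  by (simp add: mdeg_madd mdeg_munit)

lemma pdeg_ball_poly:
  assumes "1 \<le> n"
  shows "pdeg n (ball_poly n R) = 2"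
proof -
  let ?degs = "insert 0 ((\<lambda>\<gamma>. mdeg \<gamma> n) ` {\<gamma>. ball_poly n R \<gamma> \<noteq> 0})"
  have "mdeg \<gamma> n \<in> {0, 2}" if "ball_poly n R \<gamma> \<noteq> 0" for \<gamma>
    using ball_poly_support[OF that] mdeg_munit_self[of _ n] mdeg_mzero[of n] by auto
  hence sub: "?degs \<subseteq> {0, 2}"
    by (simp add: image_subset_iff)
  have "ball_poly n R (madd (munit 0) (munit 0)) \<noteq> 0" "mdeg (madd (munit 0) (munit 0)) n = 2"
    using assms by (simp_all add: ball_poly_munit_self mdeg_munit_self)
  hence "2 \<in> ?degs"
    by (intro insertI2 image_eqI[where x = "madd (munit 0) (munit 0)"]) simp_all
  moreover have "finite ?degs"
    using sub by (rule finite_subset) simp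
  ultimately show ?thesis
    unfolding pdeg_def using sub by (intro Max_eqI) auto
qed

lemma locmat_ball_poly_diag:
  assumes "1 \<le> n"
  shows "locmat n (ball_poly n R) y \<alpha> \<alpha>
           = R\<^sup>2 * y (madd \<alpha> \<alpha>) - (\<Sum>i<n. y (madd (madd \<alpha> (munit i)) (madd \<alpha> (munit i))))"
proof -
  let ?g = "ball_poly n R" and ?e = "\<lambda>i. madd (munit i) (munit i)"
  let ?t = "\<lambda>\<gamma>. ?g \<gamma> * y (madd (madd \<alpha> \<alpha>) \<gamma>)"
  have fresh: "mzero \<notin> ?e ` {..<n}"
  proof
    assume "mzero \<in> ?e ` {..<n}"
    then obtain i where "mzero = ?e i"
      by blast
    hence "mzero i = ?e i i"
      by simp
    thus False
      by (simp add: madd_munit_self mzero_def)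
  qed
  have inj: "inj_on ?e {..<n}"
    by (auto simp: inj_on_def madd_munit_self fun_eq_iff)
  have "?e i \<in> mindices n 2" if "i < n" for i
    using that by (auto simp: mindices_def mdeg_munit_self) (simp add: madd_munit_self)
  hence sub: "insert mzero (?e ` {..<n}) \<subseteq> mindices n 2"
    by (auto simp: mzero_in_mindices)
  have "locmat n ?g y \<alpha> \<alpha> = (\<Sum>\<gamma>\<in>mindices n 2. ?t \<gamma>)"
    by (simp add: locmat_def pdeg_ball_poly[OF assms])
  also have "\<dots> = (\<Sum>\<gamma>\<in>insert mzero (?e ` {..<n}). ?t \<gamma>)"
    by (rule sum.mono_neutral_right[OF finite_mindices sub]) (use ball_poly_support in fastforce)
  also have "\<dots> = ?t mzero + (\<Sum>i<n. ?t (?e i))"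
    by (simp add: fresh sum.reindex[OF inj])
  also have "\<dots> = R\<^sup>2 * y (madd \<alpha> \<alpha>) - (\<Sum>i<n. y (madd (madd \<alpha> \<alpha>) (?e i)))"
    by (simp add: ball_poly_mzero ball_poly_munit_self sum_negf)
  also have "(\<lambda>i. madd (madd \<alpha> \<alpha>) (?e i)) = (\<lambda>i. madd (madd \<alpha> (munit i)) (madd \<alpha> (munit i)))"
    by (simp add: madd_def fun_eq_iff)
  finally show ?thesis .
qed

lemma hankel_trace_le_geometric:
  fixes y :: "mindex \<Rightarrow> real"
  assumes y0: "y mzero = 1"
    and diag: "\<And>\<alpha>. \<alpha> \<in> mindices n d \<Longrightarrow> 0 \<le> y (madd \<alpha> \<alpha>)"
    and ball: "\<And>\<alpha>. \<alpha> \<in> mindices n (d - 1) \<Longrightarrow>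
      (\<Sum>i<n. y (madd (madd \<alpha> (munit i)) (madd \<alpha> (munit i)))) \<le> R\<^sup>2 * y (madd \<alpha> \<alpha>)"
    and "k \<le> d"
  shows "(\<Sum>\<alpha>\<in>mindices n k. y (madd \<alpha> \<alpha>)) \<le> (\<Sum>j\<le>k. R ^ (2 * j))"
  using \<open>k \<le> d\<close>
proof (induction k)
  case 0
  show ?case
    using y0 by (simp add: mindices_0)
next
  case (Suc k)
  have "(\<Sum>\<alpha>\<in>mindices n (Suc k). y (madd \<alpha> \<alpha>))
          \<le> y (madd mzero mzero) + (\<Sum>\<alpha>\<in>mindices n k. \<Sum>i<n. y (madd (madd \<alpha> (munit i)) (madd \<alpha> (munit i))))"
    using diag mindices_mono[OF Suc.prems] by (intro sum_mindices_Suc_le) blast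
  also have "\<dots> \<le> 1 + (\<Sum>\<alpha>\<in>mindices n k. R\<^sup>2 * y (madd \<alpha> \<alpha>))"
  proof (intro add_mono sum_mono)
    fix \<alpha> assume "\<alpha> \<in> mindices n k"
    moreover have "mindices n k \<subseteq> mindices n (d - 1)"
      using Suc.prems by (intro mindices_mono) simp
    ultimately show "(\<Sum>i<n. y (madd (madd \<alpha> (munit i)) (madd \<alpha> (munit i)))) \<le> R\<^sup>2 * y (madd \<alpha> \<alpha>)"
      by (intro ball) blast
  qed (simp add: y0)
  also have "\<dots> \<le> 1 + R\<^sup>2 * (\<Sum>j\<le>k. R ^ (2 * j))"
    using Suc by (simp add: sum_distrib_left[symmetric] mult_left_mono)
  also have "\<dots> = (\<Sum>j\<le>Suc k. R ^ (2 * j))"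
    by (subst sum.atMost_Suc_shift) (simp add: sum_distrib_left power_mult power2_eq_square mult.assoc)
  finally show ?case .
qed

lemma hankel_trace_le_of_ball_psd:
  fixes y :: "mindex \<Rightarrow> real"
  assumes "1 \<le> n" and y0: "y mzero = 1"
    and hankel: "psd_on (mindices n d) (\<lambda>\<alpha> \<beta>. y (madd \<alpha> \<beta>))"
    and ball: "psd_on (mindices n (d - 1)) (locmat n (ball_poly n R) y)"
  shows "(\<Sum>\<alpha>\<in>mindices n d. y (madd \<alpha> \<alpha>)) \<le> (\<Sum>k\<le>d. R ^ (2 * k))"
proof (rule hankel_trace_le_geometric[where y = y, OF y0 _ _ order_refl])
  show "0 \<le> y (madd \<alpha> \<alpha>)" if "\<alpha> \<in> mindices n d" for \<alpha>
    using psd_on_diag_nonneg[OF hankel finite_mindices that] by simp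
  show "(\<Sum>i<n. y (madd (madd \<alpha> (munit i)) (madd \<alpha> (munit i)))) \<le> R\<^sup>2 * y (madd \<alpha> \<alpha>)"
    if "\<alpha> \<in> mindices n (d - 1)" for \<alpha>
    using psd_on_diag_nonneg[OF ball finite_mindices that] by (simp add: locmat_ball_poly_diag[OF \<open>1 \<le> n\<close>])
qed

lemma one_le_sum_powers_sq:
  fixes R :: real and d :: nat
  shows "1 \<le> (\<Sum>k\<le>d. R ^ (2 * k))"
proof -
  have "R ^ (2 * 0) \<le> (\<Sum>k\<le>d. R ^ (2 * k))"
    by (rule member_le_sum) (auto simp: power_mult)
  thus ?thesis
    by simp
qed

theorem lemma3:
  fixes n m d :: nat and R :: real and g :: "nat \<Rightarrow> rpoly" and y :: "mindex \<Rightarrow> real"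
  assumes polys: "\<forall>i\<in>{1..m}. is_poly n (g i)"
    and m_pos: "1 \<le> m"
    and ball: "g m = ball_poly n R"
    and d_ge: "d_min n g m \<le> d"
    and feas: "feasible_Pd n g m d y"
  shows "sqrt (\<Sum>\<alpha>\<in>mindices n (2 * d). (y \<alpha>)\<^sup>2)
           \<le> sqrt (real ((n + d) choose n)) * (\<Sum>k\<le>d. R ^ (2 * k))"
proof -
  let ?S = "\<Sum>k\<le>d. R ^ (2 * k)"
  have y0: "y mzero = 1"
    and psd: "\<And>i. i \<in> {0..m} \<Longrightarrow>
      psd_on (mindices n (d - halfdeg n (gpoly g i))) (locmat n (gpoly g i) y)"
    using feas by (auto simp: feasible_Pd_def)
  have hankel: "psd_on (mindices n d) (\<lambda>\<alpha> \<beta>. y (madd \<alpha> \<beta>))"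
    using psd[of 0] by (simp add: gpoly_def halfdeg_def pdeg_one_poly locmat_one_poly)
  have trace: "(\<Sum>\<alpha>\<in>mindices n d. y (madd \<alpha> \<alpha>)) \<le> ?S"
  proof (cases "n = 0")
    case True
    thus ?thesis
      using y0 one_le_sum_powers_sq[of R d] by (simp add: mindices_0_vars)
  next
    case False
    have "psd_on (mindices n (d - 1)) (locmat n (ball_poly n R) y)"
      using psd[of m] m_pos ball False by (simp add: gpoly_def halfdeg_def pdeg_ball_poly)
    with False show ?thesis
      by (intro hankel_trace_le_of_ball_psd[OF _ y0 hankel]) simp_all
  qed
  have "sqrt (\<Sum>\<alpha>\<in>mindices n (2 * d). (y \<alpha>)\<^sup>2) \<le> ?S"
    using sqrt_sum_sq_le_hankel_trace[OF hankel] trace by (rule order_trans)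
  also have "\<dots> \<le> sqrt (real ((n + d) choose n)) * ?S"
    using one_le_sum_powers_sq[of R d] by (simp add: Suc_leI zero_less_binomial)
  finally show ?thesis .
qed

end
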